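(* There is a minimal topological dynamical system which is $\mathcal{F}_t$-sensitive and not strongly $\mathcal{F}_t$-sensitive.
   Context: A topological dynamical system $(X,T)$: compact metric space $(X,d)$, $T$ continuous surjective; minimal means every orbit is dense. A set $F\subset\mathbb{Z}_+$ is thick if it contains arbitrarily long blocks of consecutive integers. $(X,T)$ is $\mathcal{F}_t$-sensitive if there is $\delta>0$ such that for each nonempty open $U$ the set $\{n\in\mathbb{N}:\operatorname{diam}(T^nU)>\delta\}$ is thick. $(X,T)$ is strongly $\mathcal{F}_t$-sensitive if there is $\delta>0$ such that for each nonempty open $U$ there are $x,y\in U$ with $\{n\in\mathbb{Z}_+: d(T^nx,T^ny)>\delta\}$ thick. *)

theory Defs
  imports "HOL-Analysis.Analysis"
begin

definition tds :: "'a metric \<Rightarrow> ('a \<Rightarrow> 'a) \<Rightarrow> bool" where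
  "tds m T \<longleftrightarrow> compact_space (mtopology_of m)
     \<and> continuous_map (mtopology_of m) (mtopology_of m) T
     \<and> T ` mspace m = mspace m"

definition minimal_tds :: "'a metric \<Rightarrow> ('a \<Rightarrow> 'a) \<Rightarrow> bool" where
  "minimal_tds m T \<longleftrightarrow> (\<forall>x \<in> mspace m.
     (mtopology_of m) closure_of {(T ^^ n) x | n. True} = mspace m)"

definition thick :: "nat set \<Rightarrow> bool" where
  "thick F \<longleftrightarrow> (\<forall>k. \<exists>a. {a..<a+k} \<subseteq> F)"

definition mdiam :: "'a metric \<Rightarrow> 'a set \<Rightarrow> real" where
  "mdiam m S = Sup {mdist m x y | x y. x \<in> S \<and> y \<in> S}"

definition Ft_sensitive :: "'a metric \<Rightarrow> ('a \<Rightarrow> 'a) \<Rightarrow> bool" where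
  "Ft_sensitive m T \<longleftrightarrow> (\<exists>\<delta>>0. \<forall>U. openin (mtopology_of m) U \<and> U \<noteq> {} \<longrightarrow>
     thick {n. n \<ge> 1 \<and> mdiam m ((T ^^ n) ` U) > \<delta>})"

definition strongly_Ft_sensitive :: "'a metric \<Rightarrow> ('a \<Rightarrow> 'a) \<Rightarrow> bool" where
  "strongly_Ft_sensitive m T \<longleftrightarrow> (\<exists>\<delta>>0. \<forall>U. openin (mtopology_of m) U \<and> U \<noteq> {} \<longrightarrow>
     (\<exists>x\<in>U. \<exists>y\<in>U. thick {n. mdist m ((T ^^ n) x) ((T ^^ n) y) > \<delta>}))"

end

theory Submission
  imports Defs
begin

text \<open>
  The example is the skew product \<open>T(z, w) = (\<lambda>z, zw)\<close> on the torus \<open>S\<^sup>1 \<times> S\<^sup>1\<close>, with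
  \<open>\<lambda> = e\<^bsup>2\<pi>i\<theta>\<^esup>\<close> and \<open>\<theta>\<close> irrational.

  It is minimal by Furstenberg's argument. Let \<open>M\<close> be a minimal closed invariant set. Since
  \<open>T\<close> commutes with the fibre rotations \<open>(z, w) \<mapsto> (z, tw)\<close>, the rotations preserving \<open>M\<close> form
  a closed subgroup of the circle, and \<open>M\<close> meets each fibre in a coset of it. If the subgroup
  is the whole circle, \<open>M\<close> is the torus. Otherwise it is finite, so \<open>w\<^sup>q\<close> depends only on
  \<open>z\<close> on \<open>M\<close> for some \<open>q > 0\<close>; this gives a continuous circle map with \<open>F(\<lambda>z) = z\<^sup>q F(z)\<close>,
  which is impossible: \<open>z \<mapsto> F(\<lambda>z)\<close> has the winding number of \<open>F\<close>, while \<open>z\<^sup>q F(z)\<close>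
  winds \<open>q\<close> times more.

  Replacing \<open>z\<close> by \<open>z e\<^bsup>i\<pi>/n\<^esup>\<close> makes the second coordinates of the \<open>n\<close>-th iterates
  antipodal, so every open set has diameter at least 2 after \<open>n\<close> steps for all large \<open>n\<close>.
  On the other hand, the second coordinates of the iterates of \<open>(z, w)\<close> and \<open>(z', w')\<close>
  differ by the factor \<open>u\<^sup>n v\<close> with \<open>u = z/z'\<close>, \<open>v = w/w'\<close>, which returns to within \<open>|arg u|\<close>
  of 1 in every block of about \<open>2\<pi>/|arg u|\<close> consecutive times; so two close points are never
  far apart along a thick set.

  Finally the torus is carried isometrically onto a subset of \<open>\<nat> \<rightarrow> \<nat>\<close> by coding each
  point by the basic open sets of a countable basis containing it.
\<close>

section \<open>Isometric conjugacy\<close>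

definition isometric_conj ::
    "'a metric \<Rightarrow> ('a \<Rightarrow> 'a) \<Rightarrow> 'b metric \<Rightarrow> ('b \<Rightarrow> 'b) \<Rightarrow> ('a \<Rightarrow> 'b) \<Rightarrow> bool" where
  "isometric_conj m0 T0 m1 T1 e \<longleftrightarrow>
     e ` mspace m0 = mspace m1
     \<and> (\<forall>x\<in>mspace m0. \<forall>y\<in>mspace m0. mdist m1 (e x) (e y) = mdist m0 x y)
     \<and> (\<forall>x\<in>mspace m0. T0 x \<in> mspace m0 \<and> T1 (e x) = e (T0 x))"

context
  fixes m0 :: "'a metric" and T0 and m1 :: "'b metric" and T1 and e
  assumes conj: "isometric_conj m0 T0 m1 T1 e"
begin

lemma isometric_conj_image: "e ` mspace m0 = mspace m1"
  and isometric_conj_mdist: "x \<in> mspace m0 \<Longrightarrow> y \<in> mspace m0 \<Longrightarrow> mdist m1 (e x) (e y) = mdist m0 x y"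
  and isometric_conj_maps_to: "x \<in> mspace m0 \<Longrightarrow> T0 x \<in> mspace m0"
  and isometric_conj_commute: "x \<in> mspace m0 \<Longrightarrow> T1 (e x) = e (T0 x)"
  using conj unfolding isometric_conj_def by auto

lemma isometric_conj_inj_on: "inj_on e (mspace m0)"
proof (rule inj_onI)
  fix x y assume xy: "x \<in> mspace m0" "y \<in> mspace m0" "e x = e y"
  then have "e y \<in> mspace m1" using isometric_conj_image by blast
  then have "mdist m1 (e x) (e y) = 0" using xy(3) by simp
  then show "x = y" using isometric_conj_mdist[OF xy(1,2)] xy(1,2) by simp
qed

lemma isometric_conj_funpow:
  "x \<in> mspace m0 \<Longrightarrow> (T0 ^^ n) x \<in> mspace m0 \<and> (T1 ^^ n) (e x) = e ((T0 ^^ n) x)"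
  by (induction n) (simp_all add: isometric_conj_maps_to isometric_conj_commute)

lemma isometric_conj_mdiam:
  assumes "S \<subseteq> mspace m0"
  shows "mdiam m1 (e ` S) = mdiam m0 S"
proof -
  have "{mdist m1 x y |x y. x \<in> e ` S \<and> y \<in> e ` S} = {mdist m1 (e x) (e y) |x y. x \<in> S \<and> y \<in> S}"
    by blast
  also have "\<dots> = {mdist m0 x y |x y. x \<in> S \<and> y \<in> S}"
    using assms by (metis (no_types, lifting) isometric_conj_mdist subsetD)
  finally show ?thesis
    unfolding mdiam_def by simp
qed

lemma isometric_conj_inverse: "isometric_conj m1 T1 m0 T0 (inv_into (mspace m0) e)"
proof -
  let ?g = "inv_into (mspace m0) e"
  have g: "?g y \<in> mspace m0" "e (?g y) = y" if "y \<in> mspace m1" for y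
    using that isometric_conj_image by (auto intro: inv_into_into f_inv_into_f)
  have ge: "?g (e x) = x" if "x \<in> mspace m0" for x
    using isometric_conj_inj_on that by simp
  show ?thesis
    unfolding isometric_conj_def
  proof (intro conjI ballI)
    show "?g ` mspace m1 = mspace m0"
      using g ge isometric_conj_image by force
  next
    fix x y assume "x \<in> mspace m1" "y \<in> mspace m1"
    then show "mdist m0 (?g x) (?g y) = mdist m1 x y"
      using isometric_conj_mdist[of "?g x" "?g y"] g by simp
  next
    fix y assume y: "y \<in> mspace m1"
    show "T1 y \<in> mspace m1"
      using g[OF y] isometric_conj_commute[of "?g y"] isometric_conj_maps_to[of "?g y"]
        isometric_conj_image by (metis imageI)
    show "T0 (?g y) = ?g (T1 y)"
      using g[OF y] isometric_conj_commute[of "?g y"] isometric_conj_maps_to[of "?g y"] ge by metis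
  qed
qed

lemma isometric_conj_homeomorphic_map: "homeomorphic_map (mtopology_of m0) (mtopology_of m1) e"
proof -
  have "Lipschitz_continuous_map m0 m1 e"
    unfolding Lipschitz_continuous_map_def using isometric_conj_image
    by (intro conjI exI[of _ 1]) (auto simp: isometric_conj_mdist)
  moreover have "Lipschitz_continuous_map m1 m0 (inv_into (mspace m0) e)"
    using isometric_conj_inverse unfolding Lipschitz_continuous_map_def isometric_conj_def
    by (intro conjI exI[of _ 1]) auto
  ultimately have "homeomorphic_maps (mtopology_of m0) (mtopology_of m1) e (inv_into (mspace m0) e)"
    unfolding homeomorphic_maps_def using isometric_conj_inj_on isometric_conj_image
    by (auto intro: Lipschitz_continuous_imp_continuous_map f_inv_into_f)
  then show ?thesis
    using homeomorphic_maps_imp_map by blast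
qed

end

lemma isometric_conj_openin:
  assumes conj: "isometric_conj m0 T0 m1 T1 e" and "openin (mtopology_of m1) U"
  obtains V where "openin (mtopology_of m0) V" "U = e ` V"
proof
  let ?V = "inv_into (mspace m0) e ` U"
  have U: "U \<subseteq> mspace m1"
    using assms openin_subset by fastforce
  then show "openin (mtopology_of m0) ?V"
    using homeomorphic_map_openness[OF isometric_conj_homeomorphic_map[OF isometric_conj_inverse[OF conj]]]
      assms by simp
  show "U = e ` ?V"
    using U isometric_conj_image[OF conj] by (force simp: image_image f_inv_into_f)
qed

lemma tds_isometric_conj:
  assumes conj: "isometric_conj m0 T0 m1 T1 e" and tds: "tds m0 T0"
  shows "tds m1 T1"
proof -
  let ?g = "inv_into (mspace m0) e"
  have conj': "isometric_conj m1 T1 m0 T0 ?g"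
    using conj by (rule isometric_conj_inverse)
  have hom: "homeomorphic_map (mtopology_of m0) (mtopology_of m1) e"
    and hom': "homeomorphic_map (mtopology_of m1) (mtopology_of m0) ?g"
    using conj conj' by (simp_all add: isometric_conj_homeomorphic_map)
  have "compact_space (mtopology_of m1)"
    using tds hom homeomorphic_compact_space homeomorphic_space unfolding tds_def by blast
  moreover have "continuous_map (mtopology_of m1) (mtopology_of m1) T1"
  proof (rule continuous_map_eq)
    show "continuous_map (mtopology_of m1) (mtopology_of m1) (e \<circ> T0 \<circ> ?g)"
      using tds hom hom' unfolding tds_def
      by (meson continuous_map_compose homeomorphic_imp_continuous_map)
    fix y assume "y \<in> topspace (mtopology_of m1)"
    then show "(e \<circ> T0 \<circ> ?g) y = T1 y"
      using isometric_conj_commute[OF conj, of "?g y"] isometric_conj_image[OF conj]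
      by (simp add: f_inv_into_f inv_into_into)
  qed
  moreover have "T1 ` mspace m1 = mspace m1"
  proof -
    have "T1 ` mspace m1 = e ` T0 ` mspace m0"
      unfolding isometric_conj_image[OF conj, symmetric] image_image
      using isometric_conj_commute[OF conj] by simp
    then show ?thesis
      using tds isometric_conj_image[OF conj] unfolding tds_def by simp
  qed
  ultimately show ?thesis
    unfolding tds_def by blast
qed

lemma minimal_tds_isometric_conj:
  assumes conj: "isometric_conj m0 T0 m1 T1 e" and min: "minimal_tds m0 T0"
  shows "minimal_tds m1 T1"
  unfolding minimal_tds_def
proof
  fix y assume "y \<in> mspace m1"
  then obtain x where x: "x \<in> mspace m0" "y = e x"
    using isometric_conj_image[OF conj] by blast
  have "{(T1 ^^ n) y |n. True} = e ` {(T0 ^^ n) x |n. True}"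
    using isometric_conj_funpow[OF conj x(1)] x(2) by auto
  moreover have "{(T0 ^^ n) x |n. True} \<subseteq> topspace (mtopology_of m0)"
    using isometric_conj_funpow[OF conj x(1)] by auto
  ultimately show "mtopology_of m1 closure_of {(T1 ^^ n) y |n. True} = mspace m1"
    using homeomorphic_map_closure_of[OF isometric_conj_homeomorphic_map[OF conj]] min x(1)
      isometric_conj_image[OF conj]
    unfolding minimal_tds_def by simp
qed

lemma Ft_sensitive_isometric_conj:
  assumes conj: "isometric_conj m0 T0 m1 T1 e" and sens: "Ft_sensitive m0 T0"
  shows "Ft_sensitive m1 T1"
proof -
  obtain \<delta> where \<delta>: "\<delta> > 0" "\<And>V. openin (mtopology_of m0) V \<Longrightarrow> V \<noteq> {} \<Longrightarrow>
      thick {n. n \<ge> 1 \<and> mdiam m0 ((T0 ^^ n) ` V) > \<delta>}"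
    using sens unfolding Ft_sensitive_def by blast
  have "thick {n. n \<ge> 1 \<and> mdiam m1 ((T1 ^^ n) ` U) > \<delta>}"
    if U: "openin (mtopology_of m1) U" "U \<noteq> {}" for U
  proof -
    obtain V where V: "openin (mtopology_of m0) V" "U = e ` V"
      using isometric_conj_openin[OF conj U(1)] .
    have Vm: "V \<subseteq> mspace m0"
      using V(1) openin_subset by fastforce
    have "(T1 ^^ n) ` U = e ` (T0 ^^ n) ` V" for n
      unfolding V(2) image_image using Vm isometric_conj_funpow[OF conj] by (auto simp: subset_iff)
    moreover have "(T0 ^^ n) ` V \<subseteq> mspace m0" for n
      using Vm isometric_conj_funpow[OF conj] by blast
    ultimately have "mdiam m1 ((T1 ^^ n) ` U) = mdiam m0 ((T0 ^^ n) ` V)" for n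
      by (simp add: isometric_conj_mdiam[OF conj])
    then show ?thesis
      using \<delta>(2)[OF V(1)] U(2) V(2) by simp
  qed
  then show ?thesis
    unfolding Ft_sensitive_def using \<delta>(1) by blast
qed

lemma strongly_Ft_sensitive_isometric_conj:
  assumes conj: "isometric_conj m0 T0 m1 T1 e" and sens: "strongly_Ft_sensitive m0 T0"
  shows "strongly_Ft_sensitive m1 T1"
proof -
  obtain \<delta> where \<delta>: "\<delta> > 0" "\<And>V. openin (mtopology_of m0) V \<Longrightarrow> V \<noteq> {} \<Longrightarrow>
      \<exists>x\<in>V. \<exists>y\<in>V. thick {n. mdist m0 ((T0 ^^ n) x) ((T0 ^^ n) y) > \<delta>}"
    using sens unfolding strongly_Ft_sensitive_def by blast
  have "\<exists>x\<in>U. \<exists>y\<in>U. thick {n. mdist m1 ((T1 ^^ n) x) ((T1 ^^ n) y) > \<delta>}"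
    if U: "openin (mtopology_of m1) U" "U \<noteq> {}" for U
  proof -
    obtain V where V: "openin (mtopology_of m0) V" "U = e ` V"
      using isometric_conj_openin[OF conj U(1)] .
    have Vm: "V \<subseteq> mspace m0"
      using V(1) openin_subset by fastforce
    obtain x y where xy: "x \<in> V" "y \<in> V" "thick {n. mdist m0 ((T0 ^^ n) x) ((T0 ^^ n) y) > \<delta>}"
      using \<delta>(2)[OF V(1)] U(2) V(2) by blast
    have "mdist m1 ((T1 ^^ n) (e x)) ((T1 ^^ n) (e y)) = mdist m0 ((T0 ^^ n) x) ((T0 ^^ n) y)" for n
      using isometric_conj_funpow[OF conj] isometric_conj_mdist[OF conj] xy(1,2) Vm by (simp add: subset_iff)
    then have "thick {n. mdist m1 ((T1 ^^ n) (e x)) ((T1 ^^ n) (e y)) > \<delta>}"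
      using xy(3) by simp
    then show ?thesis
      using xy(1,2) V(2) by blast
  qed
  then show ?thesis
    unfolding strongly_Ft_sensitive_def using \<delta>(1) by blast
qed

definition image_metric :: "('a \<Rightarrow> 'b) \<Rightarrow> 'a metric \<Rightarrow> 'b metric" where
  "image_metric e m = metric (e ` mspace m,
     \<lambda>u v. mdist m (inv_into (mspace m) e u) (inv_into (mspace m) e v))"

lemma isometric_conj_image_metric:
  assumes inj: "inj_on e (mspace m)" and T: "T ` mspace m \<subseteq> mspace m"
  shows "isometric_conj m T (image_metric e m) (e \<circ> T \<circ> inv_into (mspace m) e) e"
proof -
  let ?g = "inv_into (mspace m) e"
  have ge: "?g (e x) = x" if "x \<in> mspace m" for x
    using inj that by simp
  have "Metric_space (e ` mspace m) (\<lambda>u v. mdist m (?g u) (?g v))"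
    by unfold_locales (auto simp: ge mdist_commute intro: mdist_triangle)
  then have "mspace (image_metric e m) = e ` mspace m"
    "mdist (image_metric e m) = (\<lambda>u v. mdist m (?g u) (?g v))"
    unfolding image_metric_def by (simp_all add: Metric_space.mspace_metric Metric_space.mdist_metric)
  then show ?thesis
    unfolding isometric_conj_def using T ge by auto
qed

lemma ex_inj_nat_fun: "\<exists>e :: 'a::{t1_space, second_countable_topology} \<Rightarrow> nat \<Rightarrow> nat. inj e"
proof -
  obtain \<B> :: "'a set set" where \<B>: "countable \<B>" "topological_basis \<B>"
    using ex_countable_basis by blast
  have "x = y" if "(\<lambda>n. of_bool (x \<in> from_nat_into \<B> n)) = (\<lambda>n. of_bool (y \<in> from_nat_into \<B> n) :: nat)"
    for x y :: 'a
  proof (rule ccontr)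
    assume "x \<noteq> y"
    then obtain U where "open U" "x \<in> U" "y \<notin> U"
      using separation_t1 by blast
    then obtain B where B: "B \<in> \<B>" "x \<in> B" "y \<notin> B"
      using topological_basisE[OF \<B>(2)] by (metis subsetD)
    then have "from_nat_into \<B> (to_nat_on \<B> B) = B"
      using \<B>(1) by (simp add: from_nat_into_to_nat_on)
    then show False
      using fun_cong[OF that, of "to_nat_on \<B> B"] B by simp
  qed
  then show ?thesis
    by (intro exI[of _ "\<lambda>x n. of_bool (x \<in> from_nat_into \<B> n)"] injI)
qed

lemma ex_isometric_conj_nat_fun:
  fixes m :: "'a::{t1_space, second_countable_topology} metric"
  assumes "T ` mspace m \<subseteq> mspace m"
  obtains m' :: "(nat \<Rightarrow> nat) metric" and T' e where "isometric_conj m T m' T' e"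
proof -
  obtain e :: "'a \<Rightarrow> nat \<Rightarrow> nat" where "inj e"
    using ex_inj_nat_fun by blast
  then have "inj_on e (mspace m)"
    by (rule inj_on_subset) simp
  then show ?thesis
    using isometric_conj_image_metric[OF _ assms] that by blast
qed

section \<open>Estimates on the unit circle\<close>

lemma norm_cis_minus_one_sq: "(cmod (cis x - 1))\<^sup>2 = 2 - 2 * cos x"
proof -
  have "(cmod (cis x - 1))\<^sup>2 = (cos x - 1)\<^sup>2 + (sin x)\<^sup>2"
    by (simp add: cmod_power2)
  also have "\<dots> = 2 - 2 * cos x"
    using sin_cos_squared_add[of x] by (simp add: power2_diff)
  finally show ?thesis .
qed

lemma norm_cis_minus_one_le: "cmod (cis x - 1) \<le> \<bar>x\<bar>"
proof -
  have "cos x = 1 - 2 * (sin (x/2))\<^sup>2"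
    using cos_double_sin[of "x/2"] by simp
  then have "(cmod (cis x - 1))\<^sup>2 = 4 * (sin (x/2))\<^sup>2"
    by (simp add: norm_cis_minus_one_sq)
  also have "\<dots> \<le> 4 * (x/2)\<^sup>2"
    using abs_sin_x_le_abs_x[of "x/2"] by (simp only: abs_le_square_iff)
  also have "\<dots> = \<bar>x\<bar>\<^sup>2"
    by (simp add: power_divide)
  finally show ?thesis
    by (rule power2_le_imp_le) simp
qed

lemma norm_cis_diff_le: "cmod (cis x - cis y) \<le> \<bar>x - y\<bar>"
proof -
  have "cis x - cis y = cis y * (cis (x - y) - 1)"
    by (simp add: algebra_simps cis_mult)
  then show ?thesis
    using norm_cis_minus_one_le[of "x - y"] by (simp add: norm_mult)
qed

lemma norm_cis_minus_one_uminus: "cmod (cis (- x) - 1) = cmod (cis x - 1)"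
  by (metis cis_cnj complex_cnj_diff complex_cnj_one complex_mod_cnj)

lemma cis_add_multiple_2pi: "cis (x + 2 * pi * of_int k) = cis x"
  by (simp add: cis_mult[symmetric])

lemma cis_Arg_unit: "cmod u = 1 \<Longrightarrow> cis (Arg u) = u"
proof -
  assume u: "cmod u = 1"
  then have "u \<noteq> 0"
    by auto
  then show ?thesis
    using u by (simp add: cis_Arg sgn_div_norm)
qed

lemma norm_divide_minus_one: "cmod b = 1 \<Longrightarrow> cmod (a / b - 1) = dist a b"
proof -
  assume b: "cmod b = 1"
  then have "a / b - 1 = (a - b) / b"
    by (auto simp: diff_divide_distrib)
  then show ?thesis
    using b by (simp add: norm_divide dist_norm)
qed

lemma norm_cis_minus_one_pos: "0 < x \<Longrightarrow> x \<le> pi \<Longrightarrow> 0 < cmod (cis x - 1)"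
proof -
  assume "0 < x" "x \<le> pi"
  then have "0 < (cmod (cis x - 1))\<^sup>2"
    using cos_monotone_0_pi[of 0 x] norm_cis_minus_one_sq[of x] by simp
  then show ?thesis
    by (simp add: zero_less_power2)
qed

lemma abs_Arg_less_if_near_one:
  assumes u: "cmod u = 1" and \<eta>: "0 < \<eta>" "\<eta> \<le> pi" and near: "cmod (u - 1) < cmod (cis \<eta> - 1)"
  shows "\<bar>Arg u\<bar> < \<eta>"
proof (rule ccontr)
  assume "\<not> \<bar>Arg u\<bar> < \<eta>"
  moreover have "\<bar>Arg u\<bar> \<le> pi"
    using Arg_bounded[of u] by arith
  ultimately have "cos \<bar>Arg u\<bar> \<le> cos \<eta>"
    using \<eta> by (intro cos_monotone_0_pi_le) linarith+
  then have "cos (Arg u) \<le> cos \<eta>"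
    by simp
  then have "(cmod (cis \<eta> - 1))\<^sup>2 \<le> (cmod (u - 1))\<^sup>2"
    using norm_cis_minus_one_sq[of \<eta>] norm_cis_minus_one_sq[of "Arg u", unfolded cis_Arg_unit[OF u]]
    by linarith
  then have "cmod (cis \<eta> - 1) \<le> cmod (u - 1)"
    by (rule power2_le_imp_le) simp
  then show False
    using near by linarith
qed

lemma cis_return_bounded_gap_pos:
  assumes "\<theta> > 0"
  obtains n where "a \<le> n" "n \<le> a + nat \<lfloor>2*pi/\<theta>\<rfloor>" "cmod (cis (real n * \<theta> + \<psi>) - 1) \<le> \<theta>"
proof -
  define x where "x = real a * \<theta> + \<psi>"
  define k where "k = \<lceil>x / (2*pi)\<rceil>"
  define y where "y = (2*pi*k - x) / \<theta>"
  have "x / (2*pi) \<le> k" "k - 1 < x / (2*pi)"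
    using ceiling_correct[of "x / (2*pi)"] unfolding k_def by linarith+
  then have "x \<le> 2*pi*k" "2*pi*k < x + 2*pi"
    using pi_gt_zero by (simp_all add: field_simps)
  then have y: "0 \<le> y" "y < 2*pi/\<theta>"
    using assms unfolding y_def by (simp_all add: divide_strict_right_mono)
  define j where "j = nat \<lfloor>y\<rfloor>"
  have j: "real j \<le> y" "y < real j + 1"
    using y(1) unfolding j_def by linarith+
  have j_le: "j \<le> nat \<lfloor>2*pi/\<theta>\<rfloor>"
    using y(2) unfolding j_def by (meson floor_mono less_imp_le nat_mono)
  have "real (a + j) * \<theta> + \<psi> - 2*pi*k = (real j - y) * \<theta>"
    using assms unfolding x_def y_def by (simp add: field_simps)
  then have "\<bar>real (a + j) * \<theta> + \<psi> - 2*pi*k\<bar> \<le> \<theta>"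
    using j assms by (simp add: abs_mult mult_le_cancel_right1)
  moreover have "cis (real (a + j) * \<theta> + \<psi>) = cis (real (a + j) * \<theta> + \<psi> - 2*pi*k)"
    using cis_add_multiple_2pi[of "real (a + j) * \<theta> + \<psi> - 2*pi*k" k] by simp
  ultimately have "cmod (cis (real (a + j) * \<theta> + \<psi>) - 1) \<le> \<theta>"
    using norm_cis_minus_one_le order_trans by metis
  with j_le show ?thesis
    using that[of "a + j"] by simp
qed

lemma cis_return_bounded_gap:
  assumes "\<theta> \<noteq> 0"
  obtains n where "a \<le> n" "n \<le> a + nat \<lfloor>2*pi/\<bar>\<theta>\<bar>\<rfloor>" "cmod (cis (real n * \<theta> + \<psi>) - 1) \<le> \<bar>\<theta>\<bar>"
proof (cases "\<theta> > 0")
  case True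
  then obtain n where "a \<le> n" "n \<le> a + nat \<lfloor>2*pi/\<theta>\<rfloor>" "cmod (cis (real n * \<theta> + \<psi>) - 1) \<le> \<theta>"
    using cis_return_bounded_gap_pos by blast
  then show ?thesis
    using that True by simp
next
  case False
  then obtain n where n: "a \<le> n" "n \<le> a + nat \<lfloor>2*pi/\<bar>\<theta>\<bar>\<rfloor>"
      "cmod (cis (real n * (-\<theta>) + (-\<psi>)) - 1) \<le> \<bar>\<theta>\<bar>"
    using assms cis_return_bounded_gap_pos[of "-\<theta>" a "-\<psi>"] by auto
  have "cmod (cis (real n * (-\<theta>) + (-\<psi>)) - 1) = cmod (cis (real n * \<theta> + \<psi>) - 1)"
    using norm_cis_minus_one_uminus[of "real n * \<theta> + \<psi>"] by simp
  then show ?thesis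
    using that[OF n(1,2)] n(3) by linarith
qed

section \<open>Minimal invariant sets\<close>

definition minimal_invariant :: "('a::topological_space \<Rightarrow> 'a) \<Rightarrow> 'a set \<Rightarrow> bool" where
  "minimal_invariant f M \<longleftrightarrow> M \<noteq> {} \<and> closed M \<and> f ` M \<subseteq> M \<and>
     (\<forall>N. N \<subseteq> M \<longrightarrow> N \<noteq> {} \<longrightarrow> closed N \<longrightarrow> f ` N \<subseteq> N \<longrightarrow> N = M)"

lemma funpow_in_invariant: "f ` M \<subseteq> M \<Longrightarrow> x \<in> M \<Longrightarrow> (f ^^ n) x \<in> M"
  by (induction n) auto

lemma image_orbit_closure_subset:
  assumes "continuous_on UNIV f"
  shows "f ` closure (range (\<lambda>n. (f ^^ n) x)) \<subseteq> closure (range (\<lambda>n. (f ^^ n) x))"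
proof -
  have "f ((f ^^ n) x) \<in> range (\<lambda>n. (f ^^ n) x)" for n
    using rangeI[of "\<lambda>n. (f ^^ n) x" "Suc n"] by simp
  then have "f ` range (\<lambda>n. (f ^^ n) x) \<subseteq> closure (range (\<lambda>n. (f ^^ n) x))"
    using closure_subset by blast
  then show ?thesis
    by (intro image_closure_subset[OF continuous_on_subset[OF assms]]) simp_all
qed

lemma orbit_closure_minimal_invariant:
  assumes f: "continuous_on UNIV f" and M: "minimal_invariant f M" and "x \<in> M"
  shows "closure (range (\<lambda>n. (f ^^ n) x)) = M"
proof -
  let ?O = "range (\<lambda>n. (f ^^ n) x)"
  have invM: "f ` M \<subseteq> M" and minM: "\<And>N. N \<subseteq> M \<Longrightarrow> N \<noteq> {} \<Longrightarrow> closed N \<Longrightarrow> f ` N \<subseteq> N \<Longrightarrow> N = M"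
    and "closed M"
    using M unfolding minimal_invariant_def by blast+
  have "closure ?O \<subseteq> M"
    using funpow_in_invariant[OF invM \<open>x \<in> M\<close>] \<open>closed M\<close> by (intro closure_minimal) auto
  then show ?thesis
    using minM image_orbit_closure_subset[OF f] by simp
qed

lemma compact_chain_Inter_nonempty:
  assumes K: "compact K" and "\<C> \<noteq> {}"
    and sub: "\<And>N. N \<in> \<C> \<Longrightarrow> N \<subseteq> K \<and> closed N \<and> N \<noteq> {}"
    and chain: "\<And>A B. A \<in> \<C> \<Longrightarrow> B \<in> \<C> \<Longrightarrow> A \<subseteq> B \<or> B \<subseteq> A"
  shows "\<Inter>\<C> \<noteq> {}"
proof -
  have "K \<inter> \<Inter>\<C> \<noteq> {}"
  proof (rule compact_imp_fip[OF K])
    fix \<F> assume \<F>: "finite \<F>" "\<F> \<subseteq> \<C>"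
    show "K \<inter> \<Inter>\<F> \<noteq> {}"
    proof (cases "\<F> = {}")
      case False
      have "subset.chain \<C> \<F>"
        using \<F>(2) chain unfolding subset_chain_def by blast
      then have "\<Inter>\<F> \<in> \<F>"
        using \<F>(1) False by (rule Inter_in_chain[rotated 2])
      then show ?thesis
        using sub \<F>(2) by (metis Int_absorb1 subsetD)
    qed (use K \<open>\<C> \<noteq> {}\<close> sub in auto)
  qed (use sub in simp)
  then show ?thesis
    by blast
qed

lemma ex_minimal_invariant_subset:
  fixes f :: "'a::t2_space \<Rightarrow> 'a"
  assumes K: "compact K" "K \<noteq> {}" "f ` K \<subseteq> K"
  obtains M where "M \<subseteq> K" "minimal_invariant f M"
proof -
  define \<A> where "\<A> = {N. N \<subseteq> K \<and> N \<noteq> {} \<and> closed N \<and> f ` N \<subseteq> N}"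
  have chains: "\<exists>u\<in>\<A>. \<forall>N\<in>\<C>. u \<subseteq> N" if \<C>: "\<C> \<in> Chains (relation_of (\<lambda>A B. B \<subseteq> A) \<A>)" for \<C>
  proof (cases "\<C> = {}")
    case True
    have "K \<in> \<A>"
      using K compact_imp_closed unfolding \<A>_def by simp
    then show ?thesis
      using True by blast
  next
    case False
    have \<C>\<A>: "\<C> \<subseteq> \<A>" and chain: "\<And>A B. A \<in> \<C> \<Longrightarrow> B \<in> \<C> \<Longrightarrow> A \<subseteq> B \<or> B \<subseteq> A"
      using \<C> unfolding Chains_def relation_of_def by auto
    have sub: "N \<subseteq> K" "closed N" "f ` N \<subseteq> N" "N \<noteq> {}" if "N \<in> \<C>" for N
      using that \<C>\<A> unfolding \<A>_def by auto
    have "\<Inter>\<C> \<noteq> {}"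
      using compact_chain_Inter_nonempty[OF K(1) False] sub chain by blast
    moreover have "\<Inter>\<C> \<subseteq> K" "f ` \<Inter>\<C> \<subseteq> \<Inter>\<C>" "closed (\<Inter>\<C>)"
      using False sub by (blast, blast, simp add: closed_Inter)
    ultimately have "\<Inter>\<C> \<in> \<A>"
      unfolding \<A>_def by blast
    then show ?thesis
      by blast
  qed
  have "partial_order_on \<A> (relation_of (\<lambda>A B. B \<subseteq> A) \<A>)"
    by (rule partial_order_on_relation_ofI) auto
  from predicate_Zorn[OF this chains] obtain M where M: "M \<in> \<A>" "\<And>N. N \<in> \<A> \<Longrightarrow> N \<subseteq> M \<Longrightarrow> N = M"
    by blast
  show ?thesis
  proof
    show "M \<subseteq> K"
      using M(1) unfolding \<A>_def by simp
    then show "minimal_invariant f M"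
      using M unfolding minimal_invariant_def \<A>_def by auto
  qed
qed

section \<open>Subgroups, rotations and self-maps of the circle\<close>

lemma mult_cnj_unit: "cmod t = 1 \<Longrightarrow> t * cnj t = 1"
  by (metis complex_norm_square of_real_1 power_one)

lemma circle_powers_approx:
  assumes g: "cmod g = 1" "Arg g \<noteq> 0" and t: "cmod t = 1"
  obtains n where "cmod (g ^ n - t) \<le> \<bar>Arg g\<bar>"
proof -
  obtain n where n: "cmod (cis (real n * Arg g + - Arg t) - 1) \<le> \<bar>Arg g\<bar>"
    using cis_return_bounded_gap[OF g(2)] by metis
  have "g ^ n = cis (real n * Arg g)"
    using cis_Arg_unit[OF g(1)] Complex.DeMoivre by metis
  moreover have "t * cis (real n * Arg g + - Arg t) = cis (Arg t + (real n * Arg g + - Arg t))"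
    by (subst (1) cis_Arg_unit[OF t, symmetric]) (rule cis_mult)
  ultimately have "g ^ n - t = t * (cis (real n * Arg g + - Arg t) - 1)"
    by (simp add: right_diff_distrib)
  then show ?thesis
    using that[of n] n t by (simp add: norm_mult)
qed


lemma unit_power_returns_near_one:
  assumes u: "cmod u = 1" and v: "cmod v = 1" and "\<bar>Arg u\<bar> < \<epsilon>" "cmod (v - 1) < \<epsilon>"
  shows "\<exists>n\<in>{a..<a + (nat \<lfloor>2*pi/\<bar>Arg u\<bar>\<rfloor> + 1)}. cmod (u ^ n * v - 1) < \<epsilon>"
proof (cases "Arg u = 0")
  case True
  then have "u = 1"
    using cis_Arg_unit[OF u] by simp
  then show ?thesis
    using assms(4) by (intro bexI[of _ a]) auto
next
  case False
  obtain n where n: "a \<le> n" "n \<le> a + nat \<lfloor>2*pi/\<bar>Arg u\<bar>\<rfloor>"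
      "cmod (cis (real n * Arg u + Arg v) - 1) \<le> \<bar>Arg u\<bar>"
    using cis_return_bounded_gap[OF False] by blast
  have "u ^ n * v = cis (real n * Arg u + Arg v)"
    using cis_Arg_unit[OF u] cis_Arg_unit[OF v] by (metis Complex.DeMoivre cis_mult)
  then show ?thesis
    using n assms(3) by (intro bexI[of _ n]) auto
qed

lemma circle_subgroup_eq_circle:
  assumes H: "H \<subseteq> sphere 0 1" "closed H" "\<And>g n. g \<in> H \<Longrightarrow> g ^ n \<in> H"
    and near_one: "\<And>e. e > 0 \<Longrightarrow> \<exists>h\<in>H. h \<noteq> 1 \<and> cmod (h - 1) < e"
  shows "H = sphere 0 1"
proof
  show "sphere 0 1 \<subseteq> H"
  proof
    fix t :: complex assume t: "t \<in> sphere 0 1"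
    have "\<exists>y\<in>H. dist y t < e" if "e > 0" for e
    proof -
      define \<eta> where "\<eta> = min e pi"
      have \<eta>: "0 < \<eta>" "\<eta> \<le> pi" "\<eta> \<le> e"
        using that unfolding \<eta>_def by auto
      obtain h where h: "h \<in> H" "h \<noteq> 1" "cmod (h - 1) < cmod (cis \<eta> - 1)"
        using near_one norm_cis_minus_one_pos[OF \<eta>(1,2)] by blast
      have unit: "cmod h = 1"
        using h(1) H(1) by auto
      have "Arg h \<noteq> 0"
        using cis_Arg_unit[OF unit] h(2) by force
      moreover have "\<bar>Arg h\<bar> < e"
        using abs_Arg_less_if_near_one[OF unit \<eta>(1,2) h(3)] \<eta>(3) by simp
      ultimately obtain n where "cmod (h ^ n - t) < e"
        using circle_powers_approx[OF unit] t by (metis mem_sphere_0 le_less_trans)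
      then show ?thesis
        using H(3)[OF h(1)] by (auto simp: dist_norm)
    qed
    then show "t \<in> H"
      using H(2) closed_approachable by blast
  qed
qed (use assms in simp)

lemma circle_subgroup_finite:
  assumes H: "H \<subseteq> sphere 0 1" "\<And>s t. s \<in> H \<Longrightarrow> t \<in> H \<Longrightarrow> s * cnj t \<in> H"
    and e: "e > 0" "\<And>h. h \<in> H \<Longrightarrow> h \<noteq> 1 \<Longrightarrow> e \<le> cmod (h - 1)"
  shows "finite H"
proof -
  have "e \<le> dist s t" if "s \<in> H" "t \<in> H" "s \<noteq> t" for s t
  proof -
    have unit: "cmod t = 1"
      using that H(1) by auto
    then have "s - t = (s * cnj t - 1) * t"
      using mult_cnj_unit[of t] by (simp add: algebra_simps)
    then have "dist s t = cmod (s * cnj t - 1)"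
      using unit by (simp add: dist_norm norm_mult)
    moreover have "s * cnj t \<noteq> 1"
      using \<open>s - t = (s * cnj t - 1) * t\<close> that(3) by auto
    ultimately show ?thesis
      using e(2)[OF H(2)[OF that(1,2)]] by simp
  qed
  then have "uniform_discrete H"
    using e(1) by (intro uniformI2) auto
  moreover have "bounded H"
    using H(1) bounded_subset bounded_sphere by blast
  ultimately show ?thesis
    using uniform_discrete_finite_iff by blast
qed

lemma pow_fact_card_eq_one:
  fixes H :: "'a::idom set"
  assumes H: "finite H" "0 \<notin> H" "\<And>g n. g \<in> H \<Longrightarrow> g ^ n \<in> H" and h: "h \<in> H"
  shows "h ^ fact (card H) = 1"
proof -
  have "(\<lambda>k. h ^ k) ` {0..card H} \<subseteq> H"
    using H(3)[OF h] by blast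
  then have "card ((\<lambda>k. h ^ k) ` {0..card H}) < card {0..card H}"
    using card_mono[OF H(1)] by (simp add: le_imp_less_Suc)
  then obtain i j where ij: "i < j" "j \<le> card H" "h ^ i = h ^ j"
    using pigeonhole[of "\<lambda>k. h ^ k" "{0..card H}"] unfolding inj_on_def
    by (metis atLeastAtMost_iff linorder_neqE_nat)
  have "h ^ i * h ^ (j - i) = h ^ j"
    using ij(1) by (simp flip: power_add)
  also have "\<dots> = h ^ i * 1"
    using ij(3) by simp
  finally have "h ^ i * h ^ (j - i) = h ^ i * 1" .
  then have "h ^ (j - i) = 1"
    using H(2) h by (metis mult_left_cancel power_eq_0_iff)
  moreover have "(j - i) dvd fact (card H)"
    using ij by (intro dvd_fact) auto
  ultimately show ?thesis
    by (metis dvdE power_mult power_one)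
qed

lemma rotation_orbit_dense:
  assumes \<theta>: "\<theta> \<notin> \<rat>" and z: "cmod z = 1" and t: "cmod t = 1" and "e > 0"
  obtains n where "cmod (cis (2*pi*\<theta>) ^ n * z - t) < e"
proof -
  define \<alpha> where "\<alpha> = Arg (t * cnj z) / (2*pi)"
  have "e / (2*pi) > 0"
    using \<open>e > 0\<close> by simp
  then obtain h k where k: "k > 0" "\<bar>of_int k * \<theta> - of_int h - \<alpha>\<bar> < e / (2*pi)"
    using sequence_of_fractional_parts_is_dense[OF \<theta>, where \<alpha> = \<alpha>] by blast
  define n where "n = nat k"
  have "t = z * cis (2*pi*\<alpha>)"
    using cis_Arg_unit[of "t * cnj z"] mult_cnj_unit[OF z] z t unfolding \<alpha>_def
    by (simp add: norm_mult algebra_simps)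
  also have "cis (2*pi*\<alpha>) = cis (2*pi*(\<alpha> + of_int h))"
    using cis_add_multiple_2pi[of "2*pi*\<alpha>" h] by (simp add: distrib_left)
  finally have "cis (2*pi*\<theta>) ^ n * z - t = z * (cis (2*pi*(of_int k * \<theta>)) - cis (2*pi*(\<alpha> + of_int h)))"
    using k(1) unfolding n_def by (simp add: Complex.DeMoivre algebra_simps)
  then have "cmod (cis (2*pi*\<theta>) ^ n * z - t) \<le> \<bar>2*pi*(of_int k * \<theta>) - 2*pi*(\<alpha> + of_int h)\<bar>"
    using z norm_cis_diff_le by (simp add: norm_mult)
  also have "\<dots> = 2*pi * \<bar>of_int k * \<theta> - of_int h - \<alpha>\<bar>"
  proof -
    have "2*pi*(of_int k * \<theta>) - 2*pi*(\<alpha> + of_int h) = 2*pi * (of_int k * \<theta> - of_int h - \<alpha>)"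
      by (simp add: algebra_simps)
    then show ?thesis
      by (simp add: abs_mult)
  qed
  also have "\<dots> < e"
    using k(2) by (simp add: pos_less_divide_eq mult.commute)
  finally show ?thesis
    using that by blast
qed

lemma exp_eq_one_imp_constant:
  fixes h :: "real \<Rightarrow> complex"
  assumes h: "continuous_on UNIV h" and exp_h: "\<And>x. exp (h x) = 1"
  shows "h x = h 0"
proof -
  have "2*pi \<le> cmod (h y - h x)" if "h y \<noteq> h x" for x y
  proof -
    obtain m n :: int where x: "Re (h x) = 0" "Im (h x) = of_int (2*n) * pi"
        and y: "Re (h y) = 0" "Im (h y) = of_int (2*m) * pi"
      using exp_h[of x] exp_h[of y] unfolding exp_eq_1 by metis
    then have "m \<noteq> n"
      using that by (metis complex_eqI)
    then have "1 \<le> \<bar>of_int m - of_int n :: real\<bar>"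
      by linarith
    moreover have "Im (h y - h x) = 2*pi * (of_int m - of_int n)"
      using x y by (simp add: algebra_simps)
    ultimately have "2*pi \<le> \<bar>Im (h y - h x)\<bar>"
      by (simp add: abs_mult)
    then show ?thesis
      using abs_Im_le_cmod[of "h y - h x"] by linarith
  qed
  then have "h constant_on UNIV"
    using h by (intro continuous_discrete_range_constant) (auto intro!: exI[of _ "2*pi"])
  then show ?thesis
    unfolding constant_on_def by auto
qed

lemma no_twisted_circle_map:
  assumes F: "continuous_on (sphere 0 1) F" "F ` sphere 0 1 \<subseteq> sphere 0 1"
    and twist: "\<And>z. cmod z = 1 \<Longrightarrow> F (cis b * z) = z ^ q * F z" and "q > 0"
  shows False
proof -
  define g where "g t = F (cis t)" for t
  have g_cont: "continuous_on UNIV g"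
    unfolding g_def by (rule continuous_on_compose2[OF F(1)]) (auto intro: continuous_intros)
  have g_nz: "g t \<noteq> 0" for t
  proof -
    have "F (cis t) \<in> sphere 0 1"
      using F(2) by (simp add: image_subset_iff)
    then show ?thesis
      unfolding g_def by auto
  qed
  obtain G where G: "continuous_on UNIV G" "\<And>t. g t = exp (G t)"
    using g_cont g_nz convex_imp_Borsukian[of "UNIV :: real set"]
    unfolding Borsukian_continuous_logarithm by force
  define D where "D t = G (t + 2*pi) - G t" for t
  define E where "E t = G (t + b) - G t - \<i> * of_real (real q * t)" for t
  have "continuous_on UNIV D"
    unfolding D_def by (intro continuous_intros continuous_on_compose2[OF G(1)]) auto
  moreover have "exp (D t) = 1" for t
    using g_nz[of t] unfolding D_def by (simp add: exp_diff flip: G(2)) (simp add: g_def cis_mult[symmetric])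
  ultimately have D: "D t = D 0" for t
    by (rule exp_eq_one_imp_constant)
  have "continuous_on UNIV E"
    unfolding E_def by (intro continuous_intros continuous_on_compose2[OF G(1)]) auto
  moreover have "exp (E t) = 1" for t
  proof -
    have "g (t + b) = cis (real q * t) * g t"
      using twist[of "cis t"] unfolding g_def by (simp add: cis_mult add.commute Complex.DeMoivre)
    then show ?thesis
      using g_nz[of t] unfolding E_def by (simp add: exp_diff cis_conv_exp flip: G(2))
  qed
  ultimately have E: "E t = E 0" for t
    by (rule exp_eq_one_imp_constant)
  have "G (b + 2*pi) = G 0 + E 0 + D 0"
    using D[of b] E[of 0] unfolding D_def E_def by (simp add: algebra_simps)
  moreover have "G (2*pi + b) = G 0 + D 0 + \<i> * of_real (real q * (2*pi)) + E 0"
    using D[of 0] E[of "2*pi"] unfolding D_def E_def by (simp add: algebra_simps)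
  ultimately have "real q * (2*pi) = 0"
    by (simp add: add.commute algebra_simps)
  then show False
    using \<open>q > 0\<close> by simp
qed

section \<open>The skew product on the torus\<close>

lemma mdist_le_mdiam:
  assumes "x \<in> S" "y \<in> S" and bound: "\<And>u v. u \<in> S \<Longrightarrow> v \<in> S \<Longrightarrow> mdist m u v \<le> B"
  shows "mdist m x y \<le> mdiam m S"
  unfolding mdiam_def using assms by (intro cSup_upper bdd_aboveI[of _ B]) auto

definition torus :: "(complex \<times> complex) set" where
  "torus = sphere 0 1 \<times> sphere 0 1"

definition torus_metric :: "(complex \<times> complex) metric" where
  "torus_metric = submetric euclidean_metric torus"

definition skew :: "real \<Rightarrow> complex \<times> complex \<Rightarrow> complex \<times> complex" where
  "skew \<theta> p = (cis (2*pi*\<theta>) * fst p, fst p * snd p)"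

lemma mem_torus: "(z, w) \<in> torus \<longleftrightarrow> cmod z = 1 \<and> cmod w = 1"
  by (simp add: torus_def)

lemma compact_torus: "compact torus"
  by (simp add: torus_def compact_Times)

lemma mspace_torus_metric [simp]: "mspace torus_metric = torus"
  and mdist_torus_metric [simp]: "mdist torus_metric = dist"
  and mtopology_of_torus_metric: "mtopology_of torus_metric = top_of_set torus"
  by (simp_all add: torus_metric_def mtopology_of_submetric)

lemma dist_le_mdiam_torus:
  assumes "S \<subseteq> torus" "p \<in> S" "q \<in> S"
  shows "dist p q \<le> mdiam torus_metric S"
proof -
  obtain B where B: "\<And>p q. p \<in> torus \<Longrightarrow> q \<in> torus \<Longrightarrow> dist p q \<le> B"
    using compact_torus compact_imp_bounded bounded_two_points by metis
  have "mdist torus_metric p q \<le> mdiam torus_metric S"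
  proof (rule mdist_le_mdiam)
    fix u v assume "u \<in> S" "v \<in> S"
    then have "u \<in> torus" "v \<in> torus"
      using assms(1) by blast+
    then show "mdist torus_metric u v \<le> B"
      using B by simp
  qed (fact assms(2), fact assms(3))
  then show ?thesis
    by simp
qed

lemma funpow_skew:
  "(skew \<theta> ^^ n) (z, w) = (cis (2*pi*\<theta>) ^ n * z, cis (2*pi*\<theta>) ^ (n choose 2) * z ^ n * w)"
  by (induction n) (simp_all add: skew_def numeral_2_eq_2 power_add algebra_simps)

lemma skew_in_torus: "p \<in> torus \<Longrightarrow> skew \<theta> p \<in> torus"
  by (cases p) (simp add: skew_def mem_torus norm_mult)

lemma funpow_skew_in_torus: "p \<in> torus \<Longrightarrow> (skew \<theta> ^^ n) p \<in> torus"
  by (induction n) (simp_all add: skew_in_torus)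

lemma continuous_on_skew: "continuous_on S (skew \<theta>)"
  unfolding skew_def by (intro continuous_intros)

lemma tds_skew: "tds torus_metric (skew \<theta>)"
  unfolding tds_def mtopology_of_torus_metric
proof (intro conjI)
  show "compact_space (top_of_set torus)"
    using compact_torus by (simp add: compact_space_subtopology)
  show "continuous_map (top_of_set torus) (top_of_set torus) (skew \<theta>)"
    using continuous_on_skew skew_in_torus by (auto simp: continuous_map_in_subtopology)
  have "(z, w) \<in> skew \<theta> ` torus" if "(z, w) \<in> torus" for z w
  proof
    show "(z, w) = skew \<theta> (cis (- 2*pi*\<theta>) * z, cis (2*pi*\<theta>) * w / z)"
      using that by (auto simp: skew_def mem_torus cis_mult)
    show "(cis (- 2*pi*\<theta>) * z, cis (2*pi*\<theta>) * w / z) \<in> torus"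
      using that by (simp add: mem_torus norm_mult norm_divide)
  qed
  then show "skew \<theta> ` mspace torus_metric = mspace torus_metric"
    using skew_in_torus by auto
qed

lemma thick_if_atLeast_subset: "{N..} \<subseteq> F \<Longrightarrow> thick F"
  unfolding thick_def by (intro allI exI[of _ N]) auto

lemma dist_rotate_base_le: "cmod z = 1 \<Longrightarrow> dist (z, w) (z * cis x, w) \<le> \<bar>x\<bar>"
proof -
  assume "cmod z = 1"
  moreover have "dist (z, w) (z * cis x, w) = cmod (z * (cis x - 1))"
    by (simp add: dist_Pair_Pair dist_norm algebra_simps norm_minus_commute)
  ultimately show ?thesis
    using norm_cis_minus_one_le[of x] by (simp add: norm_mult)
qed

lemma dist_funpow_skew_half_turn:
  assumes "(z, w) \<in> torus" "n \<ge> 1"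
  shows "2 \<le> dist ((skew \<theta> ^^ n) (z, w)) ((skew \<theta> ^^ n) (z * cis (pi / n), w))"
proof -
  define c where "c = cis (2*pi*\<theta>) ^ (n choose 2) * z ^ n * w"
  have "real n * (pi / n) = pi"
    using assms(2) by simp
  then have "cis (pi / n) ^ n = -1"
    unfolding Complex.DeMoivre by simp
  then have "snd ((skew \<theta> ^^ n) (z * cis (pi / n), w)) = - c"
    unfolding c_def by (simp add: funpow_skew power_mult_distrib)
  moreover have "snd ((skew \<theta> ^^ n) (z, w)) = c"
    unfolding c_def by (simp add: funpow_skew)
  moreover have "cmod c = 1"
    using assms(1) unfolding c_def by (simp add: mem_torus norm_mult norm_power)
  ultimately have "dist (snd ((skew \<theta> ^^ n) (z, w))) (snd ((skew \<theta> ^^ n) (z * cis (pi / n), w))) = 2"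
    by (simp add: dist_norm)
  then show ?thesis
    using dist_snd_le by metis
qed

lemma Ft_sensitive_skew: "Ft_sensitive torus_metric (skew \<theta>)"
  unfolding Ft_sensitive_def mtopology_of_torus_metric
proof (intro exI[of _ 1] conjI allI impI)
  fix U assume U: "openin (top_of_set torus) U \<and> U \<noteq> {}"
  then obtain z w where zw: "(z, w) \<in> U"
    by auto
  have Utorus: "U \<subseteq> torus"
    using U by (meson openin_imp_subset)
  obtain r where r: "r > 0" "\<And>q. q \<in> torus \<Longrightarrow> dist q (z, w) < r \<Longrightarrow> q \<in> U"
    using U zw unfolding openin_euclidean_subtopology_iff by meson
  define N where "N = nat \<lceil>pi / r\<rceil> + 1"
  have "{N..} \<subseteq> {n. n \<ge> 1 \<and> mdiam torus_metric ((skew \<theta> ^^ n) ` U) > 1}"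
  proof
    fix n assume "n \<in> {N..}"
    then have "N \<le> n"
      by simp
    have n: "n \<ge> 1" "pi / r < n"
      using \<open>N \<le> n\<close> unfolding N_def by linarith+
    then have "pi / n < r"
      using r(1) by (simp add: divide_less_eq mult.commute)
    moreover have "(z * cis (pi / n), w) \<in> torus"
      using zw Utorus by (auto simp: mem_torus norm_mult)
    ultimately have q: "(z * cis (pi / n), w) \<in> U"
      using r dist_rotate_base_le[of z w "pi / n"] zw Utorus
      by (auto simp: mem_torus dist_commute)
    have "(skew \<theta> ^^ n) ` U \<subseteq> torus"
      using Utorus funpow_skew_in_torus by blast
    then have "dist ((skew \<theta> ^^ n) (z, w)) ((skew \<theta> ^^ n) (z * cis (pi / n), w))
        \<le> mdiam torus_metric ((skew \<theta> ^^ n) ` U)"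
      by (intro dist_le_mdiam_torus imageI zw q)
    moreover have "2 \<le> dist ((skew \<theta> ^^ n) (z, w)) ((skew \<theta> ^^ n) (z * cis (pi / n), w))"
      using zw Utorus n(1) by (intro dist_funpow_skew_half_turn) blast+
    ultimately have "2 \<le> mdiam torus_metric ((skew \<theta> ^^ n) ` U)"
      by simp
    then show "n \<in> {n. n \<ge> 1 \<and> mdiam torus_metric ((skew \<theta> ^^ n) ` U) > 1}"
      using n by simp
  qed
  then show "thick {n. n \<ge> 1 \<and> mdiam torus_metric ((skew \<theta> ^^ n) ` U) > 1}"
    by (rule thick_if_atLeast_subset)
qed simp

lemma not_thick_if_gaps: "(\<And>a. \<exists>n\<in>{a..<a+L}. n \<notin> F) \<Longrightarrow> \<not> thick F"
  unfolding thick_def by blast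

lemma dist_funpow_skew_le:
  assumes "(z, w) \<in> torus" "(z', w') \<in> torus"
  shows "dist ((skew \<theta> ^^ n) (z, w)) ((skew \<theta> ^^ n) (z', w'))
           \<le> dist z z' + cmod ((z / z') ^ n * (w / w') - 1)"
proof -
  let ?l = "cis (2*pi*\<theta>)" and ?c = "cis (2*pi*\<theta>) ^ (n choose 2) * z' ^ n * w'"
  have unit: "cmod z = 1" "cmod z' = 1" "cmod w = 1" "cmod w' = 1"
    using assms by (simp_all add: mem_torus)
  have "dist ((skew \<theta> ^^ n) (z, w)) ((skew \<theta> ^^ n) (z', w'))
      \<le> cmod (?l ^ n * z - ?l ^ n * z') + cmod (?c * ((z / z') ^ n * (w / w')) - ?c)"
  proof -
    have "?c * ((z / z') ^ n * (w / w')) = cis (2*pi*\<theta>) ^ (n choose 2) * z ^ n * w"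
      using unit by (auto simp: power_divide field_simps)
    then show ?thesis
      unfolding funpow_skew dist_norm by (simp add: norm_Pair_le)
  qed
  also have "cmod (?l ^ n * z - ?l ^ n * z') = dist z z'"
    by (simp add: dist_norm norm_mult norm_power flip: right_diff_distrib)
  also have "cmod (?c * ((z / z') ^ n * (w / w')) - ?c) = cmod ((z / z') ^ n * (w / w') - 1)"
  proof -
    have "cmod ?c = 1"
      using unit by (simp add: norm_mult norm_power)
    then show ?thesis
      by (metis mult.right_neutral mult_1 norm_mult right_diff_distrib)
  qed
  finally show ?thesis .
qed

lemma not_thick_dist_funpow_skew_gt:
  assumes "\<delta> > 0"
  obtains r where "r > 0" "\<And>x y. x \<in> torus \<Longrightarrow> y \<in> torus \<Longrightarrow> dist x y < r \<Longrightarrow>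
      \<not> thick {n. dist ((skew \<theta> ^^ n) x) ((skew \<theta> ^^ n) y) > \<delta>}"
proof
  define \<eta> where "\<eta> = min (\<delta>/2) pi"
  have \<eta>: "0 < \<eta>" "\<eta> \<le> pi" "\<eta> \<le> \<delta>/2"
    using assms unfolding \<eta>_def by auto
  define r where "r = min (\<delta>/2) (cmod (cis \<eta> - 1))"
  show "r > 0"
    using assms norm_cis_minus_one_pos[OF \<eta>(1,2)] unfolding r_def by simp
  fix x y assume x: "x \<in> torus" and y: "y \<in> torus" and "dist x y < r"
  obtain z w z' w' where xy: "x = (z, w)" "y = (z', w')"
    by fastforce
  define u where "u = z / z'"
  define v where "v = w / w'"
  have unit: "cmod z = 1" "cmod z' = 1" "cmod w = 1" "cmod w' = 1"
    using x y xy by (simp_all add: mem_torus)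
  have "cmod (u - 1) = dist z z'" "cmod (v - 1) = dist w w'"
    using unit unfolding u_def v_def by (simp_all add: norm_divide_minus_one)
  moreover have "dist z z' < r" "dist w w' < r"
    using \<open>dist x y < r\<close> xy dist_fst_le[of x y] dist_snd_le[of x y] by auto
  ultimately have near: "cmod (u - 1) < \<delta>/2" "cmod (u - 1) < cmod (cis \<eta> - 1)" "cmod (v - 1) < \<delta>/2"
    "dist z z' < \<delta>/2"
    unfolding r_def by auto
  have unit_uv: "cmod u = 1" "cmod v = 1"
    using unit unfolding u_def v_def by (simp_all add: norm_divide)
  have bound: "dist ((skew \<theta> ^^ n) x) ((skew \<theta> ^^ n) y) < \<delta>" if "cmod (u ^ n * v - 1) < \<delta>/2" for n
    using dist_funpow_skew_le[of z w z' w', where \<theta> = \<theta> and n = n] x y xy near(4) that unfolding u_def v_def by simp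
  have "\<bar>Arg u\<bar> < \<delta>/2"
    using abs_Arg_less_if_near_one[OF unit_uv(1) \<eta>(1,2) near(2)] \<eta>(3) by simp
  have "\<exists>n\<in>{a..<a + (nat \<lfloor>2*pi/\<bar>Arg u\<bar>\<rfloor> + 1)}.
      n \<notin> {n. dist ((skew \<theta> ^^ n) x) ((skew \<theta> ^^ n) y) > \<delta>}" for a
    using unit_power_returns_near_one[OF unit_uv \<open>\<bar>Arg u\<bar> < \<delta>/2\<close> near(3), of a] bound
    by (meson mem_Collect_eq not_less less_imp_le)
  then show "\<not> thick {n. dist ((skew \<theta> ^^ n) x) ((skew \<theta> ^^ n) y) > \<delta>}"
    by (rule not_thick_if_gaps)
qed

lemma not_strongly_Ft_sensitive_skew: "\<not> strongly_Ft_sensitive torus_metric (skew \<theta>)"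
proof
  assume "strongly_Ft_sensitive torus_metric (skew \<theta>)"
  then obtain \<delta> where \<delta>: "\<delta> > 0" "\<And>U. openin (top_of_set torus) U \<Longrightarrow> U \<noteq> {} \<Longrightarrow>
      \<exists>x\<in>U. \<exists>y\<in>U. thick {n. dist ((skew \<theta> ^^ n) x) ((skew \<theta> ^^ n) y) > \<delta>}"
    unfolding strongly_Ft_sensitive_def mtopology_of_torus_metric by auto
  obtain r where r: "r > 0" "\<And>x y. x \<in> torus \<Longrightarrow> y \<in> torus \<Longrightarrow> dist x y < r \<Longrightarrow>
      \<not> thick {n. dist ((skew \<theta> ^^ n) x) ((skew \<theta> ^^ n) y) > \<delta>}"
    using not_thick_dist_funpow_skew_gt[OF \<delta>(1)] by blast
  let ?U = "torus \<inter> ball (1, 1) (r/2)"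
  have "openin (top_of_set torus) ?U"
    by (simp add: openin_open_Int)
  moreover have "(1, 1) \<in> ?U"
    using r(1) by (simp add: mem_torus)
  ultimately obtain x y where "x \<in> ?U" "y \<in> ?U"
      "thick {n. dist ((skew \<theta> ^^ n) x) ((skew \<theta> ^^ n) y) > \<delta>}"
    using \<delta>(2) by blast
  moreover have "dist x y < r"
    using \<open>x \<in> ?U\<close> \<open>y \<in> ?U\<close> dist_triangle_half_l[of x "(1, 1)" r y]
    by (simp add: dist_commute)
  ultimately show False
    using r(2) by blast
qed

section \<open>Minimality of the skew product\<close>

definition rotate_fiber :: "complex \<Rightarrow> complex \<times> complex \<Rightarrow> complex \<times> complex" where
  "rotate_fiber t p = (fst p, t * snd p)"

lemma rotate_fiber_mult: "rotate_fiber s (rotate_fiber t p) = rotate_fiber (s * t) p"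
  by (simp add: rotate_fiber_def)

lemma rotate_fiber_one [simp]: "rotate_fiber 1 p = p"
  by (simp add: rotate_fiber_def)

lemma funpow_skew_rotate_fiber: "(skew \<theta> ^^ n) (rotate_fiber t p) = rotate_fiber t ((skew \<theta> ^^ n) p)"
  by (cases p) (simp add: rotate_fiber_def funpow_skew algebra_simps)

lemma rotate_fiber_image_closure:
  assumes "t \<noteq> 0"
  shows "rotate_fiber t ` closure S = closure (rotate_fiber t ` S)"
proof (rule closure_injective_linear_image)
  show "linear (rotate_fiber t)"
    by (rule linearI) (auto simp: rotate_fiber_def algebra_simps)
  show "inj (rotate_fiber t)"
    using assms by (auto simp: inj_def rotate_fiber_def prod_eq_iff)
qed

lemma rotate_fiber_minimal_invariant:
  assumes M: "minimal_invariant (skew \<theta>) M" and "(z, w) \<in> M" "(z, t * w) \<in> M" "t \<noteq> 0"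
  shows "rotate_fiber t ` M = M"
proof -
  have "range (\<lambda>n. (skew \<theta> ^^ n) (z, t * w)) = rotate_fiber t ` range (\<lambda>n. (skew \<theta> ^^ n) (z, w))"
    using funpow_skew_rotate_fiber[where \<theta> = \<theta> and t = t and p = "(z, w)"]
    by (auto simp: rotate_fiber_def image_iff)
  then show ?thesis
    using orbit_closure_minimal_invariant[OF continuous_on_skew M] assms(2-4)
    by (metis rotate_fiber_image_closure)
qed

definition fiber_stabilizer :: "(complex \<times> complex) set \<Rightarrow> complex set" where
  "fiber_stabilizer M = {t. cmod t = 1 \<and> rotate_fiber t ` M = M}"

lemma fiber_stabilizer_subset_circle: "fiber_stabilizer M \<subseteq> sphere 0 1"
  by (auto simp: fiber_stabilizer_def)

lemma one_in_fiber_stabilizer: "1 \<in> fiber_stabilizer M"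
  by (simp add: fiber_stabilizer_def)

lemma fiber_stabilizer_mult:
  "s \<in> fiber_stabilizer M \<Longrightarrow> t \<in> fiber_stabilizer M \<Longrightarrow> s * t \<in> fiber_stabilizer M"
proof -
  have "rotate_fiber (s * t) ` M = rotate_fiber s ` rotate_fiber t ` M"
    by (simp add: image_image rotate_fiber_mult)
  then show "s \<in> fiber_stabilizer M \<Longrightarrow> t \<in> fiber_stabilizer M \<Longrightarrow> s * t \<in> fiber_stabilizer M"
    by (simp add: fiber_stabilizer_def norm_mult)
qed

lemma fiber_stabilizer_power: "t \<in> fiber_stabilizer M \<Longrightarrow> t ^ n \<in> fiber_stabilizer M"
  by (induction n) (simp_all add: one_in_fiber_stabilizer fiber_stabilizer_mult)

lemma fiber_stabilizer_cnj:
  assumes "t \<in> fiber_stabilizer M"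
  shows "cnj t \<in> fiber_stabilizer M"
proof -
  have t: "cmod t = 1" "rotate_fiber t ` M = M"
    using assms by (auto simp: fiber_stabilizer_def)
  have "cnj t * t = 1"
    using mult_cnj_unit[OF t(1)] by (simp add: mult.commute)
  have "rotate_fiber (cnj t) ` M = rotate_fiber (cnj t) ` rotate_fiber t ` M"
    using t(2) by simp
  also have "\<dots> = M"
    using \<open>cnj t * t = 1\<close> by (simp add: image_image rotate_fiber_mult)
  finally have "rotate_fiber (cnj t) ` M = M" .
  then show ?thesis
    using t(1) by (simp add: fiber_stabilizer_def)
qed

lemma mem_fiber_stabilizer:
  assumes "minimal_invariant (skew \<theta>) M" "(z, w) \<in> M" "(z, t * w) \<in> M" "cmod t = 1"
  shows "t \<in> fiber_stabilizer M"
proof -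
  have "t \<noteq> 0"
    using assms(4) by auto
  then show ?thesis
    using rotate_fiber_minimal_invariant[OF assms(1-3)] assms(4) by (simp add: fiber_stabilizer_def)
qed

lemma fiber_quotient_in_fiber_stabilizer:
  assumes M: "M \<subseteq> torus" "minimal_invariant (skew \<theta>) M" and zw: "(z, w) \<in> M" "(z, w') \<in> M"
  shows "w' * cnj w \<in> fiber_stabilizer M"
proof (rule mem_fiber_stabilizer[OF M(2) zw(1)])
  have unit: "cmod w = 1" "cmod w' = 1"
    using zw M(1) by (auto simp: mem_torus)
  then have "w' * cnj w * w = w'"
    using mult_cnj_unit[of w] by (metis mult.assoc mult.commute mult.right_neutral)
  then show "(z, w' * cnj w * w) \<in> M"
    using zw(2) by (simp only:)
  show "cmod (w' * cnj w) = 1"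
    using unit by (simp add: norm_mult)
qed

lemma closed_fiber_stabilizer:
  assumes M: "minimal_invariant (skew \<theta>) M"
  shows "closed (fiber_stabilizer M)"
proof -
  obtain z w where zw: "(z, w) \<in> M"
    using M unfolding minimal_invariant_def by auto
  have "fiber_stabilizer M = sphere 0 1 \<inter> (\<lambda>t. (z, t * w)) -` M"
  proof (intro set_eqI iffI)
    fix t assume "t \<in> fiber_stabilizer M"
    then have "cmod t = 1" "rotate_fiber t (z, w) \<in> M"
      using zw by (auto simp: fiber_stabilizer_def)
    then show "t \<in> sphere 0 1 \<inter> (\<lambda>t. (z, t * w)) -` M"
      by (simp add: rotate_fiber_def)
  next
    fix t assume "t \<in> sphere 0 1 \<inter> (\<lambda>t. (z, t * w)) -` M"
    then show "t \<in> fiber_stabilizer M"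
      using mem_fiber_stabilizer[OF M zw] by simp
  qed
  moreover have "continuous_on UNIV (\<lambda>t. (z, t * w))"
    by (intro continuous_intros)
  then have "closed ((\<lambda>t. (z, t * w)) -` M)"
    using M unfolding minimal_invariant_def by (simp add: continuous_closed_vimage)
  ultimately show ?thesis
    by (simp add: closed_Int)
qed

lemma compact_if_closed_subset_torus: "M \<subseteq> torus \<Longrightarrow> closed M \<Longrightarrow> compact M"
  using compact_torus by (metis closed_Int_compact inf.absorb1)

lemma fst_image_minimal_invariant_skew:
  assumes \<theta>: "\<theta> \<notin> \<rat>" and M: "M \<subseteq> torus" "minimal_invariant (skew \<theta>) M"
  shows "fst ` M = sphere 0 1"
proof
  show "fst ` M \<subseteq> sphere 0 1"
    using M(1) by (auto simp: torus_def)
  obtain z0 w0 where p0: "(z0, w0) \<in> M"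
    using M(2) unfolding minimal_invariant_def by auto
  have invariant: "skew \<theta> ` M \<subseteq> M"
    using M(2) unfolding minimal_invariant_def by blast
  have "closed (fst ` M)"
    using M compact_if_closed_subset_torus unfolding minimal_invariant_def
    by (intro compact_imp_closed compact_continuous_image continuous_intros) auto
  moreover have approx: "\<exists>y\<in>fst ` M. dist y z < e" if z: "z \<in> sphere 0 1" and e: "e > 0" for z e
  proof -
    have "cmod z0 = 1"
      using p0 M(1) by (auto simp: mem_torus)
    then obtain n where "cmod (cis (2*pi*\<theta>) ^ n * z0 - z) < e"
      using rotation_orbit_dense[OF \<theta> _ _ e, of z0 z] z by auto
    moreover have "(skew \<theta> ^^ n) (z0, w0) \<in> M"
      using funpow_in_invariant[OF invariant p0] .
    then have "cis (2*pi*\<theta>) ^ n * z0 \<in> fst ` M"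
      by (metis fst_conv funpow_skew image_eqI)
    ultimately show ?thesis
      by (metis dist_norm)
  qed
  ultimately show "sphere 0 1 \<subseteq> fst ` M"
    using closed_approachable by (metis subsetI)
qed

lemma ex_continuous_power_section:
  assumes M: "M \<subseteq> torus" "closed M" "fst ` M = sphere 0 1"
    and same_power: "\<And>z w w'. (z, w) \<in> M \<Longrightarrow> (z, w') \<in> M \<Longrightarrow> w ^ q = w' ^ q"
  obtains F where "continuous_on (sphere 0 1) F" "F ` sphere 0 1 \<subseteq> sphere 0 1"
    "\<And>z w. (z, w) \<in> M \<Longrightarrow> F z = w ^ q"
proof -
  define F where "F z = (SOME w. (z, w) \<in> M) ^ q" for z
  have F: "F z = w ^ q" if "(z, w) \<in> M" for z w
  proof -
    have "(z, SOME w. (z, w) \<in> M) \<in> M"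
      using that by (rule someI)
    then show ?thesis
      unfolding F_def using same_power that by blast
  qed
  have fiber: "\<exists>w. (z, w) \<in> M" if "cmod z = 1" for z
    using that M(3) by force
  have graph: "(\<lambda>z. (z, F z)) ` sphere 0 1 = (\<lambda>p. (fst p, snd p ^ q)) ` M"
  proof (intro set_eqI iffI)
    fix y assume "y \<in> (\<lambda>z. (z, F z)) ` sphere 0 1"
    then obtain z w where "y = (z, F z)" "(z, w) \<in> M"
      using fiber by force
    then show "y \<in> (\<lambda>p. (fst p, snd p ^ q)) ` M"
      using F by force
  next
    fix y assume "y \<in> (\<lambda>p. (fst p, snd p ^ q)) ` M"
    then obtain z w where "y = (z, w ^ q)" "(z, w) \<in> M"
      by force
    then show "y \<in> (\<lambda>z. (z, F z)) ` sphere 0 1"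
      using F M(3) by force
  qed
  have F_circle: "F ` sphere 0 1 \<subseteq> sphere 0 1"
  proof
    fix y assume "y \<in> F ` sphere 0 1"
    then obtain z w where "y = F z" "(z, w) \<in> M"
      using fiber by force
    then show "y \<in> sphere 0 1"
      using F M(1) by (auto simp: torus_def norm_power)
  qed
  have "compact ((\<lambda>p. (fst p, snd p ^ q)) ` M)"
    using compact_if_closed_subset_torus[OF M(1,2)] by (intro compact_continuous_image continuous_intros)
  then have "continuous_on (sphere 0 1) F"
    using F_circle unfolding graph[symmetric]
    by (intro continuous_from_closed_graph[of "sphere 0 1"] compact_imp_closed) auto
  then show ?thesis
    using that F_circle F by blast
qed

lemma no_invariant_set_with_power_section:
  assumes M: "M \<subseteq> torus" "closed M" "skew \<theta> ` M \<subseteq> M" "fst ` M = sphere 0 1" and "q > 0"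
    and same_power: "\<And>z w w'. (z, w) \<in> M \<Longrightarrow> (z, w') \<in> M \<Longrightarrow> w ^ q = w' ^ q"
  shows False
proof -
  obtain F where F: "continuous_on (sphere 0 1) F" "F ` sphere 0 1 \<subseteq> sphere 0 1"
      "\<And>z w. (z, w) \<in> M \<Longrightarrow> F z = w ^ q"
    using ex_continuous_power_section[OF M(1,2,4), of q] same_power by blast
  have "F (cis (2*pi*\<theta>) * z) = z ^ q * F z" if z: "cmod z = 1" for z
  proof -
    obtain w where w: "(z, w) \<in> M"
      using M(4) z by force
    then have "(cis (2*pi*\<theta>) * z, z * w) \<in> M"
      using M(3) unfolding skew_def by force
    then show ?thesis
      using F(3) w by (simp add: power_mult_distrib)
  qed
  then show False
    using no_twisted_circle_map F(1,2) \<open>q > 0\<close> by blast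
qed

lemma eq_torus_if_fiber_stabilizer_circle:
  assumes M: "M \<subseteq> torus" "fst ` M = sphere 0 1" and H: "fiber_stabilizer M = sphere 0 1"
  shows "M = torus"
proof
  show "torus \<subseteq> M"
  proof (rule subrelI)
    fix z w assume zw: "(z, w) \<in> torus"
    obtain w1 where w1: "(z, w1) \<in> M"
      using M(2) zw by (force simp: mem_torus)
    then have "cmod w1 = 1"
      using M(1) by (auto simp: mem_torus)
    define t where "t = w * cnj w1"
    have "cmod t = 1"
      using zw \<open>cmod w1 = 1\<close> by (simp add: t_def mem_torus norm_mult)
    then have "t \<in> fiber_stabilizer M"
      using H by simp
    then have "rotate_fiber t ` M = M"
      by (simp add: fiber_stabilizer_def)
    moreover have "rotate_fiber t (z, w1) = (z, w)"
      using mult_cnj_unit[OF \<open>cmod w1 = 1\<close>] by (simp add: rotate_fiber_def t_def mult.assoc mult.commute)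
    ultimately show "(z, w) \<in> M"
      using w1 by force
  qed
qed (use M in simp)

lemma minimal_invariant_skew_eq_torus:
  assumes \<theta>: "\<theta> \<notin> \<rat>" and M: "M \<subseteq> torus" "minimal_invariant (skew \<theta>) M"
  shows "M = torus"
proof -
  let ?H = "fiber_stabilizer M"
  have fst_M: "fst ` M = sphere 0 1"
    using fst_image_minimal_invariant_skew[OF \<theta> M] .
  have unit: "cmod w = 1" if "(z, w) \<in> M" for z w
    using that M(1) by (auto simp: mem_torus)
  have H_circle: "?H \<subseteq> sphere 0 1"
    by (rule fiber_stabilizer_subset_circle)
  consider (near_one) "\<And>e. e > 0 \<Longrightarrow> \<exists>h\<in>?H. h \<noteq> 1 \<and> cmod (h - 1) < e"
    | (isolated) e where "e > 0" "\<And>h. h \<in> ?H \<Longrightarrow> h \<noteq> 1 \<Longrightarrow> e \<le> cmod (h - 1)"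
    by (meson not_less)
  then show ?thesis
  proof cases
    case near_one
    then have "?H = sphere 0 1"
      using H_circle closed_fiber_stabilizer[OF M(2)] fiber_stabilizer_power
      by (intro circle_subgroup_eq_circle) auto
    then show ?thesis
      using eq_torus_if_fiber_stabilizer_circle[OF M(1) fst_M] by blast
  next
    case isolated
    have "finite ?H"
      using H_circle isolated fiber_stabilizer_mult fiber_stabilizer_cnj
      by (intro circle_subgroup_finite[of _ e]) auto
    define q :: nat where "q = fact (card ?H)"
    have "h ^ q = 1" if "h \<in> ?H" for h
      unfolding q_def using \<open>finite ?H\<close> H_circle fiber_stabilizer_power that
      by (intro pow_fact_card_eq_one) auto
    then have "w' ^ q = w ^ q" if "(z, w) \<in> M" "(z, w') \<in> M" for z w w'
      using fiber_quotient_in_fiber_stabilizer[OF M that] mult_cnj_unit[OF unit[OF that(1)]]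
      by (metis mult.assoc mult.commute mult_1 power_mult_distrib)
    moreover have "closed M" "skew \<theta> ` M \<subseteq> M"
      using M(2) unfolding minimal_invariant_def by blast+
    ultimately show ?thesis
      using no_invariant_set_with_power_section[OF M(1)] fst_M by (metis q_def fact_gt_zero)
  qed
qed

lemma minimal_tds_skew:
  assumes \<theta>: "\<theta> \<notin> \<rat>"
  shows "minimal_tds torus_metric (skew \<theta>)"
  unfolding minimal_tds_def mtopology_of_torus_metric mspace_torus_metric
proof
  fix p assume p: "p \<in> torus"
  let ?O = "range (\<lambda>n. (skew \<theta> ^^ n) p)"
  have orbit: "{(skew \<theta> ^^ n) p |n. True} = ?O"
    by blast
  have O_torus: "?O \<subseteq> torus"
    using p funpow_skew_in_torus by blast
  have invariant: "skew \<theta> ` closure ?O \<subseteq> closure ?O"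
    by (rule image_orbit_closure_subset[OF continuous_on_skew])
  have closure_torus: "closure ?O \<subseteq> torus"
    by (rule closure_minimal[OF O_torus compact_imp_closed[OF compact_torus]])
  then have "compact (closure ?O)"
    by (rule compact_if_closed_subset_torus) simp
  moreover have "closure ?O \<noteq> {}"
    by simp
  ultimately obtain M where M: "M \<subseteq> closure ?O" "minimal_invariant (skew \<theta>) M"
    using ex_minimal_invariant_subset invariant by blast
  then have "M = torus"
    using closure_torus by (intro minimal_invariant_skew_eq_torus[OF \<theta>]) auto
  then have "torus \<subseteq> closure ?O"
    using M(1) by simp
  moreover have "top_of_set torus closure_of ?O = torus \<inter> closure ?O"
    using O_torus by (simp add: closure_of_subtopology euclidean_closure_of Int_absorb1)
  ultimately show "top_of_set torus closure_of {(skew \<theta> ^^ n) p |n. True} = torus"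
    unfolding orbit by blast
qed

theorem corollary4p3:
  shows "\<exists>(m :: (nat \<Rightarrow> nat) metric) T. tds m T \<and> minimal_tds m T
           \<and> Ft_sensitive m T \<and> \<not> strongly_Ft_sensitive m T"
proof -
  have "\<not> (UNIV :: real set) \<subseteq> \<rat>"
    using uncountable_UNIV_real countable_rat countable_subset by blast
  then obtain \<theta> :: real where \<theta>: "\<theta> \<notin> \<rat>"
    by blast
  have "skew \<theta> ` mspace torus_metric \<subseteq> mspace torus_metric"
    using skew_in_torus by auto
  then obtain m :: "(nat \<Rightarrow> nat) metric" and T e where conj: "isometric_conj torus_metric (skew \<theta>) m T e"
    by (rule ex_isometric_conj_nat_fun)
  have "\<not> strongly_Ft_sensitive m T"
    using strongly_Ft_sensitive_isometric_conj[OF isometric_conj_inverse[OF conj]]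
      not_strongly_Ft_sensitive_skew by blast
  then show ?thesis
    using tds_isometric_conj[OF conj tds_skew] minimal_tds_isometric_conj[OF conj minimal_tds_skew[OF \<theta>]]
      Ft_sensitive_isometric_conj[OF conj Ft_sensitive_skew] by blast
qed

end
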